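(* Let $\varphi=\forall x_1\exists y_1\cdots\forall x_k\exists y_k\,P$ be a positive Horn sentence over a finite relational signature $\sigma$ with $P$ a conjunction of equality-free atomic $\sigma$-formulas. Let $R\in\sigma$ be $p$-ary, $t_1,\dots,t_p\in T_\varphi(C_\omega)$ and $c,c'\in C_\omega$. If $R(t_1,\dots,t_p)$ holds in $\mathcal{T}_\varphi(C_\omega)$, then $R(t_1[c/c'],\dots,t_p[c/c'])$ holds in $\mathcal{T}_\varphi(C_\omega)$.
   Context: Let $f_1,\dots,f_k$ be new function symbols, $f_i$ of arity $i$, $\mathrm{Sk}(\varphi)=\forall x_1\cdots\forall x_k\,P(x_1,f_1(x_1),\dots,x_k,f_k(x_1,\dots,x_k))$, and $C_\omega=\{c_1,c_2,\dots\}$ new constants. $T_\varphi(C_\omega)$ is the set of closed terms built from $C_\omega$ with the $f_i$. $\mathcal{T}_\varphi(C_\omega)$ is the $\sigma$-structure on $T_\varphi(C_\omega)$ in which $R(s_1,\dots,s_p)$ holds iff it is obtained from an atom of the matrix of $\mathrm{Sk}(\varphi)$ by substituting terms for $x_1,\dots,x_k$. $t[c/c']$ denotes the term obtained from $t$ by replacing every occurrence of the constant $c$ by $c'$. *)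

theory Defs
  imports Main
begin

text \<open>Variables of the matrix: X i stands for x_i, Y i for y_i (1 \<le> i \<le> k).\<close>
datatype var = X nat | Y nat

text \<open>Closed terms over the constants C_omega = {c_1, c_2, ...} (Const n is c_n)
  built with the Skolem function symbols f_i (Fn i args).\<close>
datatype sterm = Const nat | Fn nat "sterm list"

fun wf_term :: "nat \<Rightarrow> sterm \<Rightarrow> bool" where
  "wf_term k (Const n) = True"
| "wf_term k (Fn i ts) = (1 \<le> i \<and> i \<le> k \<and> length ts = i \<and> (\<forall>t\<in>set ts. wf_term k t))"

definition var_ok :: "nat \<Rightarrow> var \<Rightarrow> bool" where
  "var_ok k v = (case v of X i \<Rightarrow> 1 \<le> i \<and> i \<le> k | Y i \<Rightarrow> 1 \<le> i \<and> i \<le> k)"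

text \<open>A matrix P (conjunction of equality-free atoms R(v_1,...,v_p)) is given as a list of
  atoms; it is well formed over the relational signature (sigma, ar).\<close>
definition wf_matrix :: "'r set \<Rightarrow> ('r \<Rightarrow> nat) \<Rightarrow> nat \<Rightarrow> ('r \<times> var list) list \<Rightarrow> bool" where
  "wf_matrix \<sigma> ar k P = (\<forall>(R, vs) \<in> set P. R \<in> \<sigma> \<and> length vs = ar R \<and> (\<forall>v\<in>set vs. var_ok k v))"

text \<open>Substituting terms a_1..a_k for x_1..x_k in the Skolemized matrix:
  x_i becomes a_i and y_i becomes f_i(a_1,...,a_i).\<close>
fun sk_inst :: "(nat \<Rightarrow> sterm) \<Rightarrow> var \<Rightarrow> sterm" where
  "sk_inst a (X i) = a i"
| "sk_inst a (Y i) = Fn i (map a [1..<Suc i])"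

definition T_holds :: "nat \<Rightarrow> ('r \<times> var list) list \<Rightarrow> 'r \<Rightarrow> sterm list \<Rightarrow> bool" where
  "T_holds k P R ss = (\<exists>vs a. (R, vs) \<in> set P \<and> (\<forall>i\<in>{1..k}. wf_term k (a i))
       \<and> ss = map (sk_inst a) vs)"

fun csubst :: "nat \<Rightarrow> nat \<Rightarrow> sterm \<Rightarrow> sterm" where
  "csubst c c' (Const n) = (if n = c then Const c' else Const n)"
| "csubst c c' (Fn i ts) = Fn i (map (csubst c c') ts)"

end

theory Submission
  imports Defs
begin

text \<open>An atom of \<open>\<T>\<^sub>\<phi>(C\<^sub>\<omega>)\<close> is an instance of a matrix atom under some assignment
  \<open>a\<close> of terms to \<open>x\<^sub>1, \<dots>, x\<^sub>k\<close>. Renaming a constant commutes with the Skolem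
  function symbols, so applying it to such an instance yields the instance of the same
  matrix atom under the renamed assignment, which again consists of terms of
  \<open>T\<^sub>\<phi>(C\<^sub>\<omega>)\<close>.\<close>

lemma wf_term_csubst: "wf_term k t \<Longrightarrow> wf_term k (csubst c c' t)"
  by (induction t) auto

lemma csubst_sk_inst: "csubst c c' (sk_inst a v) = sk_inst (csubst c c' \<circ> a) v"
  by (cases v) auto

lemma T_holds_csubst:
  assumes "T_holds k P R ts"
  shows "T_holds k P R (map (csubst c c') ts)"
proof -
  from assms obtain vs a where atom: "(R, vs) \<in> set P"
    and wf: "\<forall>i\<in>{1..k}. wf_term k (a i)" and ts: "ts = map (sk_inst a) vs"
    unfolding T_holds_def by blast
  have "\<forall>i\<in>{1..k}. wf_term k ((csubst c c' \<circ> a) i)"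
    using wf by (simp add: wf_term_csubst)
  moreover have "map (csubst c c') ts = map (sk_inst (csubst c c' \<circ> a)) vs"
    by (simp add: ts csubst_sk_inst)
  ultimately show ?thesis
    using atom unfolding T_holds_def by blast
qed

theorem mainTheorem12:
  fixes \<sigma> :: "'r set" and ar :: "'r \<Rightarrow> nat" and k :: nat
    and P :: "('r \<times> var list) list" and R :: 'r and ts :: "sterm list" and c c' :: nat
  assumes "finite \<sigma>"
    and "wf_matrix \<sigma> ar k P"
    and "R \<in> \<sigma>"
    and "length ts = ar R"
    and "\<forall>t\<in>set ts. wf_term k t"
    and "T_holds k P R ts"
  shows "T_holds k P R (map (csubst c c') ts)"
  using assms(6) by (rule T_holds_csubst)

end
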